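(* Let $\varepsilon\in(0,1/256]$. For every $\hat x\in Q_1$ there exist $\tau\in\Gamma$ and $\rho\in\{1,\dots,\lceil1/\varepsilon\rceil\}^{|\tau|}$ such that $\hat x\in P(\mathcal S(\tau),\rho)$.
   Context: Minimum Knapsack data: $n$ items with costs $c\in\mathbb{R}^n_{\ge0}$, weights $w\in\mathbb{R}^n_{\ge0}$, target $b$; items are indexed so that $1=c_1\ge c_2\ge\dots\ge c_n$. $Q=\{x\in\{0,1\}^n:w^Tx\ge b\}$ and $Q_1=\{x\in Q: x_1=1\}$. $C_\varepsilon=\lceil\log_{1+\varepsilon}(1/\varepsilon)\rceil$. $\Gamma$ is the set of integer vectors $\tau=(\tau_1,\dots,\tau_K)\in\mathbb{Z}_{\ge0}^K$ with $0\le K=|\tau|\le\lceil2\sqrt{C_\varepsilon}\rceil$, $\tau_k+k\le\tau_{k+1}$ for $k\in[K-1]$, and $\tau_K\le C_\varepsilon-1$. For $\tau\in\Gamma$, $\mathcal S(\tau)=\{S_1,\dots,S_K,S_\infty\}$ where $S_k=\{i\in\{2,\dots,n\}:(1+\varepsilon)^{-\tau_k}\ge c_i>(1+\varepsilon)^{-\min\{\tau_k+k,C_\varepsilon\}}\}$ for $k\in[K]$, and $S_\infty=\{i\in\{2,\dots,n\}: c_i\le(1+\varepsilon)^{-C_\varepsilon}\text{ and } c_i<\min_{l\in S_K}c_l\}$ (the second condition omitted if $K=0$). For $\rho\in\{1,\dots,\lceil1/\varepsilon\rceil\}^K$, $P(\mathcal S,\rho)$ is the set of $x\in\mathbb{R}^n$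 with: $x_1=1$; $w^Tx\ge b$; $\sum_{i\in S_k}x_i=\rho_k$ for $k\in[K]$ with $\rho_k<\lceil1/\varepsilon\rceil$; $\sum_{i\in S_k}x_i\ge\rho_k$ for $k\in[K]$ with $\rho_k=\lceil1/\varepsilon\rceil$; $x_i=0$ for $i\in\{2,\dots,n\}\setminus\bigcup_{k\in[K]\cup\{\infty\}}S_k$; $0\le x_i\le1$ for $i\in\bigcup_{k\in[K]\cup\{\infty\}}S_k$. *)

theory Defs
  imports Complex_Main
begin

text \<open>Items are indexed 1..n; vectors are functions nat => real, only the
  values on {1..n} matter.\<close>

definition C_eps :: "real \<Rightarrow> nat" where
  "C_eps \<epsilon> = nat \<lceil>log (1 + \<epsilon>) (1 / \<epsilon>)\<rceil>"

definition R_eps :: "real \<Rightarrow> nat" where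
  "R_eps \<epsilon> = nat \<lceil>1 / \<epsilon>\<rceil>"

definition Q1 :: "nat \<Rightarrow> (nat \<Rightarrow> real) \<Rightarrow> real \<Rightarrow> (nat \<Rightarrow> real) set" where
  "Q1 n w b = {x. (\<forall>i\<in>{1..n}. x i \<in> {0, 1}) \<and> (\<Sum>i=1..n. w i * x i) \<ge> b \<and> x 1 = 1}"

text \<open>tau is a list (tau_1,...,tau_K) stored 0-indexed: tau ! (k-1) = tau_k.\<close>
definition Gamma :: "real \<Rightarrow> nat list set" where
  "Gamma \<epsilon> = {\<tau>. length \<tau> \<le> nat \<lceil>2 * sqrt (real (C_eps \<epsilon>))\<rceil>
      \<and> (\<forall>k. 1 \<le> k \<and> k < length \<tau> \<longrightarrow> \<tau> ! (k - 1) + k \<le> \<tau> ! k)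
      \<and> (length \<tau> > 0 \<longrightarrow> \<tau> ! (length \<tau> - 1) + 1 \<le> C_eps \<epsilon>)}"

definition S_k :: "real \<Rightarrow> nat \<Rightarrow> (nat \<Rightarrow> real) \<Rightarrow> nat list \<Rightarrow> nat \<Rightarrow> nat set" where
  "S_k \<epsilon> n c \<tau> k = {i\<in>{2..n}. (1 + \<epsilon>) powr (- real (\<tau> ! (k - 1))) \<ge> c i
      \<and> c i > (1 + \<epsilon>) powr (- real (min (\<tau> ! (k - 1) + k) (C_eps \<epsilon>)))}"

definition S_inf :: "real \<Rightarrow> nat \<Rightarrow> (nat \<Rightarrow> real) \<Rightarrow> nat list \<Rightarrow> nat set" where
  "S_inf \<epsilon> n c \<tau> = {i\<in>{2..n}. c i \<le> (1 + \<epsilon>) powr (- real (C_eps \<epsilon>))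
      \<and> (length \<tau> > 0 \<longrightarrow> (\<forall>l\<in>S_k \<epsilon> n c \<tau> (length \<tau>). c i < c l))}"

definition Ppoly :: "real \<Rightarrow> nat \<Rightarrow> (nat \<Rightarrow> real) \<Rightarrow> (nat \<Rightarrow> real) \<Rightarrow> real
      \<Rightarrow> nat list \<Rightarrow> nat list \<Rightarrow> (nat \<Rightarrow> real) set" where
  "Ppoly \<epsilon> n c w b \<tau> \<rho> = {x.
      x 1 = 1
    \<and> (\<Sum>i=1..n. w i * x i) \<ge> b
    \<and> (\<forall>k\<in>{1..length \<tau>}. \<rho> ! (k - 1) < R_eps \<epsilon> \<longrightarrow>
          (\<Sum>i\<in>S_k \<epsilon> n c \<tau> k. x i) = real (\<rho> ! (k - 1)))
    \<and> (\<forall>k\<in>{1..length \<tau>}. \<rho> ! (k - 1) = R_eps \<epsilon> \<longrightarrow>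
          (\<Sum>i\<in>S_k \<epsilon> n c \<tau> k. x i) \<ge> real (\<rho> ! (k - 1)))
    \<and> (\<forall>i\<in>{2..n}. i \<notin> (\<Union>k\<in>{1..length \<tau>}. S_k \<epsilon> n c \<tau> k) \<union> S_inf \<epsilon> n c \<tau> \<longrightarrow> x i = 0)
    \<and> (\<forall>i\<in>(\<Union>k\<in>{1..length \<tau>}. S_k \<epsilon> n c \<tau> k) \<union> S_inf \<epsilon> n c \<tau>. 0 \<le> x i \<and> x i \<le> 1)}"

end

theory Submission imports Defs begin

text \<open>Split the cost range \<open>((1+\<epsilon>)^-C, 1]\<close> into the \<open>C\<close> geometric levels
  \<open>((1+\<epsilon>)^-(t+1), (1+\<epsilon>)^-t]\<close>. Greedily cover the levels occupied by the chosen items with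
  windows whose \<open>k\<close>-th one starts at the lowest uncovered occupied level and has width \<open>k\<close>;
  the windows are exactly the classes \<open>S_k\<close>. Since the \<open>k\<close>-th window starts at a level of
  at least \<open>k(k-1)/2\<close> and all levels are below \<open>C\<close>, there are at most \<open>2\<surd>C\<close> windows.
  The chosen items outside the windows are cheaper than \<open>(1+\<epsilon>)^-C\<close>, hence lie in
  \<open>S_\<infinity>\<close>, and \<open>\<rho>_k\<close> is the number of chosen items in \<open>S_k\<close>, truncated at \<open>\<lceil>1/\<epsilon>\<rceil>\<close>.\<close>

lemma greedy_window_cover:
  fixes L :: "nat set"
  assumes "finite L" and "k > 0"
  shows "\<exists>\<tau>. (\<forall>j<length \<tau>. s \<le> \<tau>!j \<and> \<tau>!j \<in> L)
     \<and> (\<forall>j. Suc j < length \<tau> \<longrightarrow> \<tau>!j + (k + j) \<le> \<tau>!Suc j)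
     \<and> (\<forall>t\<in>L. s \<le> t \<longrightarrow> (\<exists>j<length \<tau>. \<tau>!j \<le> t \<and> t < \<tau>!j + (k + j)))"
  using assms(2)
proof (induction "card {t\<in>L. s \<le> t}" arbitrary: s k rule: less_induct)
  case less
  show ?case
  proof (cases "{t\<in>L. s \<le> t} = {}")
    case True
    then show ?thesis by (intro exI[of _ "[]"]) auto
  next
    case False
    define m where "m = Min {t\<in>L. s \<le> t}"
    have fin: "finite {t\<in>L. s \<le> t}" using assms(1) by simp
    have m: "m \<in> L" "s \<le> m" using Min_in[OF fin False] by (auto simp: m_def)
    have m_min: "m \<le> t" if "t \<in> L" "s \<le> t" for t
      using Min_le[OF fin] that by (auto simp: m_def)
    have "{t\<in>L. m + k \<le> t} \<subset> {t\<in>L. s \<le> t}"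
    proof -
      have "{t\<in>L. m + k \<le> t} \<subseteq> {t\<in>L. s \<le> t}" using m by auto
      moreover have "m \<in> {t\<in>L. s \<le> t} - {t\<in>L. m + k \<le> t}" using m less.prems by simp
      ultimately show ?thesis by blast
    qed
    then have "card {t\<in>L. m + k \<le> t} < card {t\<in>L. s \<le> t}"
      using fin by (rule psubset_card_mono[rotated])
    from less.hyps[OF this, of "Suc k"] obtain \<tau> where
      in_L: "\<forall>j<length \<tau>. m + k \<le> \<tau>!j \<and> \<tau>!j \<in> L"
      and gaps: "\<forall>j. Suc j < length \<tau> \<longrightarrow> \<tau>!j + (Suc k + j) \<le> \<tau>!Suc j"
      and cover: "\<forall>t\<in>L. m + k \<le> t \<longrightarrow> (\<exists>j<length \<tau>. \<tau>!j \<le> t \<and> t < \<tau>!j + (Suc k + j))"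
      by auto
    have "\<forall>j<length (m#\<tau>). s \<le> (m#\<tau>)!j \<and> (m#\<tau>)!j \<in> L"
      using in_L m by (auto simp: nth_Cons split: nat.split)
    moreover have "\<forall>j. Suc j < length (m#\<tau>) \<longrightarrow> (m#\<tau>)!j + (k + j) \<le> (m#\<tau>)!Suc j"
      using in_L gaps by (auto simp: nth_Cons split: nat.split)
    moreover have "\<exists>j<length (m#\<tau>). (m#\<tau>)!j \<le> t \<and> t < (m#\<tau>)!j + (k + j)"
      if "t \<in> L" "s \<le> t" for t
    proof (cases "t < m + k")
      case True
      then show ?thesis using m_min[OF that] by (intro exI[of _ 0]) auto
    next
      case False
      then have "m + k \<le> t" by simp
      with cover that(1) obtain j where "j < length \<tau>" "\<tau>!j \<le> t" "t < \<tau>!j + (Suc k + j)"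
        by (meson bspec mp)
      then show ?thesis by (intro exI[of _ "Suc j"]) auto
    qed
    ultimately show ?thesis by blast
  qed
qed

lemma triangular_le_window_start:
  assumes "\<forall>j. Suc j < length \<tau> \<longrightarrow> \<tau>!j + (1 + j) \<le> \<tau>!Suc j"
  shows "j < length \<tau> \<Longrightarrow> j * (j + 1) \<le> 2 * \<tau>!j"
proof (induction j)
  case (Suc j)
  then have "\<tau>!j + (1 + j) \<le> \<tau>!Suc j" using assms by auto
  with Suc show ?case by auto
qed simp

lemma le_ceiling_two_sqrt:
  fixes K C :: nat
  assumes "K * (K - 1) \<le> 2 * C" and "K \<ge> 1 \<Longrightarrow> C \<ge> 1"
  shows "K \<le> nat \<lceil>2 * sqrt (real C)\<rceil>"
proof -
  have "real K \<le> 2 * sqrt (real C)"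
  proof (cases "K \<ge> 2")
    case True
    then have "K * K \<le> 2 * (K * (K - 1))" by (cases K) auto
    with assms(1) have "K * K \<le> 4 * C" by linarith
    then have "real K * real K \<le> 4 * real C"
      by (metis of_nat_le_iff of_nat_mult of_nat_numeral)
    then have "sqrt (real K * real K) \<le> sqrt (4 * real C)" by (rule real_sqrt_le_mono)
    then show ?thesis by (simp add: real_sqrt_mult)
  next
    case False
    then consider "K = 0" | "K = 1" by linarith
    then show ?thesis
    proof cases
      case 2
      then have "1 \<le> real C" using assms(2) by simp
      then have "1 \<le> sqrt (real C)" by simp
      moreover have "real K = 1" using 2 by simp
      ultimately show ?thesis by linarith
    qed simp
  qed
  then show ?thesis by (metis ceiling_mono ceiling_of_nat nat_int nat_mono)
qed

lemma powr_level_exists: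
  fixes a x :: real
  assumes "a > 1" and "x \<le> 1"
  shows "x > a powr - real C \<Longrightarrow> \<exists>t<C. x \<le> a powr - real t \<and> a powr - real (t + 1) < x"
proof (induction C)
  case (Suc C)
  show ?case
  proof (cases "x > a powr - real C")
    case True
    then show ?thesis using Suc.IH less_SucI by blast
  next
    case False
    then show ?thesis using Suc.prems by (intro exI[of _ C]) auto
  qed
qed (use assms in simp)

lemma sum_binary_eq_card:
  fixes x :: "'a \<Rightarrow> real"
  assumes "finite A" and "\<forall>i\<in>A. x i \<in> {0, 1}"
  shows "sum x A = real (card {i\<in>A. x i = 1})"
proof -
  have "sum x A = (\<Sum>i\<in>A. if x i = 1 then 1 else 0)"
    using assms(2) by (intro sum.cong) auto
  also have "\<dots> = (\<Sum>i\<in>{i\<in>A. x i = 1}. 1)"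
    by (rule sum.inter_filter[OF assms(1), symmetric])
  finally show ?thesis by simp
qed

lemma R_eps_ge_1:
  assumes "0 < \<epsilon>" and "\<epsilon> \<le> 1"
  shows "R_eps \<epsilon> \<ge> 1"
proof -
  have "1 \<le> \<lceil>1 / \<epsilon>\<rceil>" using assms by (simp add: le_divide_eq_1_pos)
  then show ?thesis unfolding R_eps_def by linarith
qed

lemma Gamma_memI:
  assumes gaps: "\<forall>j. Suc j < length \<tau> \<longrightarrow> \<tau>!j + (1 + j) \<le> \<tau>!Suc j"
    and below: "\<forall>j<length \<tau>. \<tau>!j < C_eps \<epsilon>"
  shows "\<tau> \<in> Gamma \<epsilon>"
proof -
  define K where "K = length \<tau>"
  have "K * (K - 1) \<le> 2 * C_eps \<epsilon>"
  proof (cases K)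
    case (Suc m)
    then have "m * (m + 1) \<le> 2 * \<tau>!m" using triangular_le_window_start[OF gaps, of m] K_def by simp
    moreover have "\<tau>!m < C_eps \<epsilon>" using below Suc K_def by simp
    ultimately show ?thesis using Suc by (simp add: mult.commute)
  qed simp
  moreover have "K \<ge> 1 \<Longrightarrow> C_eps \<epsilon> \<ge> 1" using below K_def by fastforce
  ultimately have "K \<le> nat \<lceil>2 * sqrt (real (C_eps \<epsilon>))\<rceil>" by (rule le_ceiling_two_sqrt)
  moreover have "\<tau>!(k - 1) + k \<le> \<tau>!k" if "1 \<le> k" "k < K" for k
    using that gaps K_def by (cases k) auto
  moreover have "\<tau>!(K - 1) + 1 \<le> C_eps \<epsilon>" if "K > 0"
    using below that K_def by (simp add: Suc_leI)
  ultimately show ?thesis unfolding Gamma_def K_def by blast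
qed

lemma mem_S_kI:
  assumes "0 < \<epsilon>" and "i \<in> {2..n}"
    and "\<tau>!j \<le> t" and "t < \<tau>!j + Suc j" and "t < C_eps \<epsilon>"
    and "c i \<le> (1 + \<epsilon>) powr - real t" and "(1 + \<epsilon>) powr - real (t + 1) < c i"
  shows "i \<in> S_k \<epsilon> n c \<tau> (Suc j)"
proof -
  have "(1 + \<epsilon>) powr - real t \<le> (1 + \<epsilon>) powr - real (\<tau>!j)"
    using assms(1,3) by (intro powr_mono) auto
  moreover have "(1 + \<epsilon>) powr - real (min (\<tau>!j + Suc j) (C_eps \<epsilon>)) \<le> (1 + \<epsilon>) powr - real (t + 1)"
    using assms(1,4,5) by (intro powr_mono) auto
  ultimately show ?thesis using assms(2,6,7) by (simp add: S_k_def)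
qed

lemma mem_S_infI:
  assumes "0 < \<epsilon>" and "i \<in> {2..n}" and "c i \<le> (1 + \<epsilon>) powr - real (C_eps \<epsilon>)"
  shows "i \<in> S_inf \<epsilon> n c \<tau>"
proof -
  have "c i < c l" if "l \<in> S_k \<epsilon> n c \<tau> k" for k l
  proof -
    have "(1 + \<epsilon>) powr - real (C_eps \<epsilon>) \<le> (1 + \<epsilon>) powr - real (min (\<tau>!(k - 1) + k) (C_eps \<epsilon>))"
      using assms(1) by (intro powr_mono) auto
    then show ?thesis using that assms(3) by (simp add: S_k_def)
  qed
  then show ?thesis using assms(2,3) by (simp add: S_inf_def)
qed

definition occupied_levels :: "real \<Rightarrow> nat \<Rightarrow> (nat \<Rightarrow> real) \<Rightarrow> (nat \<Rightarrow> real) \<Rightarrow> nat set" where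
  "occupied_levels \<epsilon> n c x = {t. t < C_eps \<epsilon> \<and> (\<exists>i\<in>{2..n}. x i = 1
      \<and> c i \<le> (1 + \<epsilon>) powr - real t \<and> (1 + \<epsilon>) powr - real (t + 1) < c i)}"

lemma occupied_level_in_S_k:
  assumes "0 < \<epsilon>" and "\<tau>!j \<in> occupied_levels \<epsilon> n c x"
  shows "\<exists>i\<in>S_k \<epsilon> n c \<tau> (Suc j). x i = 1"
  using assms mem_S_kI[OF assms(1), of _ n \<tau> j "\<tau>!j" c] by (auto simp: occupied_levels_def)

lemma ones_covered_by_windows:
  assumes "0 < \<epsilon>" and "\<forall>i\<in>{2..n}. c i \<le> 1"
    and cover: "\<forall>t\<in>occupied_levels \<epsilon> n c x. \<exists>j<length \<tau>. \<tau>!j \<le> t \<and> t < \<tau>!j + (1 + j)"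
    and "i \<in> {2..n}" and "x i = 1"
  shows "i \<in> (\<Union>k\<in>{1..length \<tau>}. S_k \<epsilon> n c \<tau> k) \<union> S_inf \<epsilon> n c \<tau>"
proof (cases "c i \<le> (1 + \<epsilon>) powr - real (C_eps \<epsilon>)")
  case True
  then show ?thesis using mem_S_infI[OF assms(1,4)] by blast
next
  case False
  moreover have "1 < 1 + \<epsilon>" "c i \<le> 1" using assms(1,2,4) by auto
  ultimately obtain t where t: "t < C_eps \<epsilon>" "c i \<le> (1 + \<epsilon>) powr - real t"
      "(1 + \<epsilon>) powr - real (t + 1) < c i"
    using powr_level_exists[of "1 + \<epsilon>" "c i" "C_eps \<epsilon>"] by auto
  then have "t \<in> occupied_levels \<epsilon> n c x" using assms(4,5) by (auto simp: occupied_levels_def)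
  then obtain j where "j < length \<tau>" "\<tau>!j \<le> t" "t < \<tau>!j + Suc j" using cover by auto
  with t have "i \<in> S_k \<epsilon> n c \<tau> (Suc j)" using mem_S_kI assms(1,4) by blast
  with \<open>j < length \<tau>\<close> show ?thesis by force
qed

definition truncated_counts :: "real \<Rightarrow> nat \<Rightarrow> (nat \<Rightarrow> real) \<Rightarrow> nat list \<Rightarrow> (nat \<Rightarrow> real) \<Rightarrow> nat list" where
  "truncated_counts \<epsilon> n c \<tau> x =
     map (\<lambda>j. min (card {i\<in>S_k \<epsilon> n c \<tau> (Suc j). x i = 1}) (R_eps \<epsilon>)) [0..<length \<tau>]"

lemma finite_S_k: "finite (S_k \<epsilon> n c \<tau> k)"
  by (rule finite_subset[of _ "{2..n}"]) (auto simp: S_k_def)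

lemma truncated_counts_range:
  assumes "R_eps \<epsilon> \<ge> 1" and "\<forall>k\<in>{1..length \<tau>}. \<exists>i\<in>S_k \<epsilon> n c \<tau> k. x i = 1"
  shows "\<forall>r\<in>set (truncated_counts \<epsilon> n c \<tau> x). 1 \<le> r \<and> r \<le> R_eps \<epsilon>"
proof -
  have "card {i\<in>S_k \<epsilon> n c \<tau> k. x i = 1} \<ge> 1" if "k \<in> {1..length \<tau>}" for k
  proof -
    have "{i\<in>S_k \<epsilon> n c \<tau> k. x i = 1} \<noteq> {}" using assms(2) that by blast
    then show ?thesis using finite_S_k[of \<epsilon> n c \<tau> k] by (simp add: Suc_le_eq card_gt_0_iff)
  qed
  then show ?thesis using assms(1) by (auto simp: truncated_counts_def Suc_le_eq)
qed

lemma truncated_counts_mem_Ppoly: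
  assumes "x \<in> Q1 n w b"
    and covered: "\<forall>i\<in>{2..n}. x i = 1 \<longrightarrow> i \<in> (\<Union>k\<in>{1..length \<tau>}. S_k \<epsilon> n c \<tau> k) \<union> S_inf \<epsilon> n c \<tau>"
  shows "x \<in> Ppoly \<epsilon> n c w b \<tau> (truncated_counts \<epsilon> n c \<tau> x)"
proof -
  have binary: "\<forall>i\<in>{1..n}. x i \<in> {0, 1}" and "x 1 = 1" and "(\<Sum>i=1..n. w i * x i) \<ge> b"
    using assms(1) by (auto simp: Q1_def)
  then have binary_tail: "\<forall>i\<in>{2..n}. x i \<in> {0, 1}" by auto
  have S_k_sub: "S_k \<epsilon> n c \<tau> k \<subseteq> {2..n}" for k by (auto simp: S_k_def)
  have S_inf_sub: "S_inf \<epsilon> n c \<tau> \<subseteq> {2..n}" by (auto simp: S_inf_def)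
  have counts: "(\<Sum>i\<in>S_k \<epsilon> n c \<tau> k. x i) = real (card {i\<in>S_k \<epsilon> n c \<tau> k. x i = 1})" for k
    using binary_tail S_k_sub[of k] by (intro sum_binary_eq_card[OF finite_S_k]) blast
  have nth_counts: "truncated_counts \<epsilon> n c \<tau> x ! (k - 1)
      = min (card {i\<in>S_k \<epsilon> n c \<tau> k. x i = 1}) (R_eps \<epsilon>)" if "k \<in> {1..length \<tau>}" for k
    using that by (auto simp: truncated_counts_def)
  show ?thesis
    unfolding Ppoly_def
  proof (intro CollectI conjI ballI impI)
    fix k assume k: "k \<in> {1..length \<tau>}"
    show "(\<Sum>i\<in>S_k \<epsilon> n c \<tau> k. x i) = real (truncated_counts \<epsilon> n c \<tau> x ! (k - 1))"
      if "truncated_counts \<epsilon> n c \<tau> x ! (k - 1) < R_eps \<epsilon>"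
      using k that counts nth_counts by simp
    show "(\<Sum>i\<in>S_k \<epsilon> n c \<tau> k. x i) \<ge> real (truncated_counts \<epsilon> n c \<tau> x ! (k - 1))"
      using k counts nth_counts by simp
  next
    fix i assume "i \<in> {2..n}" "i \<notin> (\<Union>k\<in>{1..length \<tau>}. S_k \<epsilon> n c \<tau> k) \<union> S_inf \<epsilon> n c \<tau>"
    then show "x i = 0" using covered binary_tail by blast
  next
    fix i assume "i \<in> (\<Union>k\<in>{1..length \<tau>}. S_k \<epsilon> n c \<tau> k) \<union> S_inf \<epsilon> n c \<tau>"
    then have "x i \<in> {0, 1}" using binary_tail S_k_sub S_inf_sub by blast
    then show "0 \<le> x i" "x i \<le> 1" by auto
  qed (use \<open>x 1 = 1\<close> \<open>(\<Sum>i=1..n. w i * x i) \<ge> b\<close> in auto)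
qed

theorem lemma5:
  fixes n :: nat and c w :: "nat \<Rightarrow> real" and b \<epsilon> :: real and xh :: "nat \<Rightarrow> real"
  assumes "n \<ge> 1"
    and "\<forall>i\<in>{1..n}. c i \<ge> 0" and "\<forall>i\<in>{1..n}. w i \<ge> 0"
    and "c 1 = 1"
    and "\<forall>i j. 1 \<le> i \<and> i \<le> j \<and> j \<le> n \<longrightarrow> c j \<le> c i"
    and "0 < \<epsilon>" and "\<epsilon> \<le> 1 / 256"
    and "xh \<in> Q1 n w b"
  shows "\<exists>\<tau>\<in>Gamma \<epsilon>. \<exists>\<rho>. length \<rho> = length \<tau> \<and> (\<forall>r\<in>set \<rho>. 1 \<le> r \<and> r \<le> R_eps \<epsilon>)
           \<and> xh \<in> Ppoly \<epsilon> n c w b \<tau> \<rho>"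
proof -
  let ?L = "occupied_levels \<epsilon> n c xh"
  have "finite ?L" by (rule finite_subset[of _ "{..<C_eps \<epsilon>}"]) (auto simp: occupied_levels_def)
  from greedy_window_cover[OF this, of 1 0] obtain \<tau> where
    in_L: "\<forall>j<length \<tau>. \<tau>!j \<in> ?L"
    and gaps: "\<forall>j. Suc j < length \<tau> \<longrightarrow> \<tau>!j + (1 + j) \<le> \<tau>!Suc j"
    and cover: "\<forall>t\<in>?L. \<exists>j<length \<tau>. \<tau>!j \<le> t \<and> t < \<tau>!j + (1 + j)"
    by auto
  have "\<tau> \<in> Gamma \<epsilon>"
    using gaps in_L by (intro Gamma_memI) (auto simp: occupied_levels_def)
  moreover have "\<forall>i\<in>{2..n}. c i \<le> 1" using assms(4) assms(5)[rule_format, of 1] by auto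
  then have "\<forall>i\<in>{2..n}. xh i = 1 \<longrightarrow> i \<in> (\<Union>k\<in>{1..length \<tau>}. S_k \<epsilon> n c \<tau> k) \<union> S_inf \<epsilon> n c \<tau>"
    using ones_covered_by_windows[OF assms(6) _ cover] by blast
  moreover have "\<forall>k\<in>{1..length \<tau>}. \<exists>i\<in>S_k \<epsilon> n c \<tau> k. xh i = 1"
  proof
    fix k assume "k \<in> {1..length \<tau>}"
    then have "k = Suc (k - 1)" "k - 1 < length \<tau>" by auto
    then show "\<exists>i\<in>S_k \<epsilon> n c \<tau> k. xh i = 1" using in_L occupied_level_in_S_k[OF assms(6)] by metis
  qed
  then have "\<forall>r\<in>set (truncated_counts \<epsilon> n c \<tau> xh). 1 \<le> r \<and> r \<le> R_eps \<epsilon>"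
    using R_eps_ge_1[OF assms(6)] assms(7) by (intro truncated_counts_range) auto
  moreover have "length (truncated_counts \<epsilon> n c \<tau> xh) = length \<tau>"
    by (simp add: truncated_counts_def)
  ultimately show ?thesis
    using truncated_counts_mem_Ppoly[OF assms(8)] by blast
qed

end
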